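(* Let $T_1=(Q_1,\Sigma,\Delta,R_1,q_1^0)$ and $T_2=(Q_2,\Delta,\Omega,R_2,q_2^0)$ be top-down tree transducers, let $A$ be the domain automaton of $T_2$, and let $\hat{T}_1$ be the product construction of $T_1$ and $A$. Then $\text{dom}(\hat{T}_1)=\text{dom}(T_1\circ T_2)$, and for every $s\in T_\Sigma$, $\hat{T}_1(s)=T_1(s)\cap\text{dom}(T_2)$.
   Context: A top-down tree transducer $T=(Q,\Sigma,\Delta,R,q_0)$ has finite state set $Q$, ranked input/output alphabets $\Sigma,\Delta$, initial state $q_0$, and finite rule set $R$ of rules $q(a(x_1,\dots,x_k))\to t$ with $a\in\Sigma_k$ ($\Sigma_k$ = symbols of rank $k$) and $t$ a tree over $\Delta$ whose leaves may additionally be of the form $q'(x_i)$, $q'\in Q$, $i\in[k]$; rules are used as rewrite rules in the usual way. $T(s)$ is the set of trees over $\Delta$ derivable from $q_0(s)$, $\text{dom}(T)=\{s\mid T(s)\neq\emptyset\}$; $\text{dom}(T_1\circ T_2)$ is the set of $s$ such that $T_2(t)\neq\emptyset$ for some $t\in T_1(s)$. For $q\in Q$, $a\in\Sigma_k$, $\text{rhs}_T(q,a)$ is the set of right-hand sides of rules with left-hand side $q(a(x_1,\dots,x_k))$; for a set $\Gamma$ of right-hand sides, $\Gamma[x_i]$ is the set of $q'\in Q$ with $q'(x_i)$ occurring in some tree of $\Gamma$. Domain automaton of $T$: the top-down tree automaton (transducer over $\Sigma$ with rules of the form $p(a(x_1,\dots,x_k))\to a(p_1(x_1),\dots,p_k(x_k))$)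 with states all subsets of $Q$, initial state $\{q_0\}$, rules $S(a(x_1,\dots,x_k))\to a(S_1(x_1),\dots,S_k(x_k))$ for every $a\in\Sigma_k$, nonempty $S=\{q_1,\dots,q_n\}\subseteq Q$ and nonempty $\Gamma_j\subseteq\text{rhs}_T(q_j,a)$ ($j\in[n]$), where $S_i=\bigcup_j\Gamma_j[x_i]$, and rules $\emptyset(a(x_1,\dots,x_k))\to a(\emptyset(x_1),\dots,\emptyset(x_k))$ for all $a$. Product construction of transducers $T=(Q,\Sigma,\Delta,R,q_0)$ and $T'=(Q',\Delta,\Omega,R',q'_0)$: the transducer with states $Q\times Q'$, input $\Sigma$, output $\Omega$, initial state $(q_0,q'_0)$, and, for every rule $q(a(x_1,\dots,x_k))\to\xi$ of $T$, every $p\in Q'$ and every tree $\zeta$ derivable from $p(\xi)$ using rules of $T'$ in which the leaves of $\xi$ of the form $q''(x_i)$ are treated as unrewritable symbols and a state $p'$ applied to such a leaf stays as $p'(q''(x_i))$, the rule $(q,p)(a(x_1,\dots,x_k))\to\zeta'$, where $\zeta'$ is obtained from $\zeta$ by replacing each $p'(q''(x_i))$ by $(q'',p')(x_i)$. *)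

theory Defs
  imports Main
begin

datatype 'a rtree = Nd 'a "'a rtree list"

(* A ranked alphabet is a set of pairs (symbol, rank); Sigma_k = {a. (a,k) \<in> Sigma}. *)
inductive_set trees :: "('a \<times> nat) set \<Rightarrow> 'a rtree set" for Sig where
  "(a, length ts) \<in> Sig \<Longrightarrow> (\<forall>t\<in>set ts. t \<in> trees Sig) \<Longrightarrow> Nd a ts \<in> trees Sig"

(* Right-hand sides: trees over the output alphabet whose leaves may be q(x_i), i \<ge> 1. *)
datatype ('b, 'q) rhs = RNode 'b "('b, 'q) rhs list" | RVar 'q nat

fun rvars :: "('b, 'q) rhs \<Rightarrow> ('q \<times> nat) set" where
  "rvars (RVar q i) = {(q, i)}"
| "rvars (RNode b ts) = (\<Union>t\<in>set ts. rvars t)"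

fun wf_rhs :: "('b \<times> nat) set \<Rightarrow> 'q set \<Rightarrow> nat \<Rightarrow> ('b, 'q) rhs \<Rightarrow> bool" where
  "wf_rhs D Q k (RVar q i) = (q \<in> Q \<and> 1 \<le> i \<and> i \<le> k)"
| "wf_rhs D Q k (RNode b ts) = ((b, length ts) \<in> D \<and> (\<forall>t\<in>set ts. wf_rhs D Q k t))"

(* A top-down tree transducer (Q, Sigma, Delta, R, q0).
   A rule (q, a, k, t) stands for q(a(x_1,...,x_k)) -> t. *)
record ('q, 'a, 'b) tdtt =
  states :: "'q set"
  inp    :: "('a \<times> nat) set"
  outp   :: "('b \<times> nat) set"
  rules  :: "('q \<times> 'a \<times> nat \<times> ('b, 'q) rhs) set"
  init   :: 'q

definition wf_tdtt :: "('q, 'a, 'b) tdtt \<Rightarrow> bool" where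
  "wf_tdtt T \<longleftrightarrow> finite (states T) \<and> finite (inp T) \<and> finite (outp T) \<and> finite (rules T)
     \<and> init T \<in> states T
     \<and> (\<forall>(q, a, k, t) \<in> rules T. q \<in> states T \<and> (a, k) \<in> inp T \<and> wf_rhs (outp T) (states T) k t)"

(* Semantics: run T q s u  means  q(s) =>* u  (u an output tree).
   inst T ss t u  means the right-hand side t, with x_i bound to ss!(i-1), rewrites to u,
   each occurrence q'(x_i) being rewritten independently. *)
inductive run :: "('q, 'a, 'b) tdtt \<Rightarrow> 'q \<Rightarrow> 'a rtree \<Rightarrow> 'b rtree \<Rightarrow> bool"
  and inst :: "('q, 'a, 'b) tdtt \<Rightarrow> 'a rtree list \<Rightarrow> ('b, 'q) rhs \<Rightarrow> 'b rtree \<Rightarrow> bool"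
  for T where
  run_rule: "(q, a, length ss, t) \<in> rules T \<Longrightarrow> inst T ss t u \<Longrightarrow> run T q (Nd a ss) u"
| inst_var: "1 \<le> i \<Longrightarrow> i \<le> length ss \<Longrightarrow> run T q (ss ! (i - 1)) u \<Longrightarrow> inst T ss (RVar q i) u"
| inst_node: "list_all2 (inst T ss) ts us \<Longrightarrow> inst T ss (RNode b ts) (Nd b us)"

definition transl :: "('q, 'a, 'b) tdtt \<Rightarrow> 'a rtree \<Rightarrow> 'b rtree set" where
  "transl T s = {u. run T (init T) s u}"

definition tdom :: "('q, 'a, 'b) tdtt \<Rightarrow> 'a rtree set" where
  "tdom T = {s \<in> trees (inp T). transl T s \<noteq> {}}"

definition tdom_comp :: "('q1, 'a, 'b) tdtt \<Rightarrow> ('q2, 'b, 'c) tdtt \<Rightarrow> 'a rtree set" where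
  "tdom_comp T1 T2 = {s \<in> trees (inp T1). \<exists>t \<in> transl T1 s. transl T2 t \<noteq> {}}"

definition rhs_of :: "('q, 'a, 'b) tdtt \<Rightarrow> 'q \<Rightarrow> 'a \<Rightarrow> nat \<Rightarrow> ('b, 'q) rhs set" where
  "rhs_of T q a k = {t. (q, a, k, t) \<in> rules T}"

definition rhs_states_at :: "('b, 'q) rhs set \<Rightarrow> nat \<Rightarrow> 'q set" where
  "rhs_states_at Gam i = {q'. \<exists>t\<in>Gam. (q', i) \<in> rvars t}"

definition aut_rhs :: "'a \<Rightarrow> nat \<Rightarrow> (nat \<Rightarrow> 'p) \<Rightarrow> ('a, 'p) rhs" where
  "aut_rhs a k P = RNode a (map (\<lambda>i. RVar (P i) i) [1..<Suc k])"

definition domain_automaton :: "('q, 'a, 'b) tdtt \<Rightarrow> ('q set, 'a, 'a) tdtt" where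
  "domain_automaton T =
    \<lparr> states = Pow (states T), inp = inp T, outp = inp T,
      rules =
        {(S, a, k, aut_rhs a k P) | S a k P.
            (a, k) \<in> inp T \<and> S \<noteq> {} \<and> S \<subseteq> states T \<and>
            (\<exists>Gam :: 'q \<Rightarrow> ('b, 'q) rhs set.
               (\<forall>q\<in>S. Gam q \<noteq> {} \<and> Gam q \<subseteq> rhs_of T q a k) \<and>
               (\<forall>i. P i = (\<Union>q\<in>S. rhs_states_at (Gam q) i)))}
        \<union> {({}, a, k, aut_rhs a k (\<lambda>_. {})) | a k. (a, k) \<in> inp T},
      init = {init T} \<rparr>"

(* Product construction.  pder T' p xi zeta: zeta' is derivable from p(xi) by rules of T',
   leaves q''(x_i) of xi being unrewritable, with p'(q''(x_i)) already replaced by (q'',p')(x_i).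
   pinst T' xis t zeta: instantiating rhs t of T' with y_j := xis!(j-1) and deriving. *)
inductive pder :: "('p, 'b, 'c) tdtt \<Rightarrow> 'p \<Rightarrow> ('b, 'q) rhs \<Rightarrow> ('c, 'q \<times> 'p) rhs \<Rightarrow> bool"
  and pinst :: "('p, 'b, 'c) tdtt \<Rightarrow> ('b, 'q) rhs list \<Rightarrow> ('c, 'p) rhs \<Rightarrow> ('c, 'q \<times> 'p) rhs \<Rightarrow> bool"
  for T' where
  pder_var: "pder T' p (RVar q i) (RVar (q, p) i)"
| pder_rule: "(p, b, length xis, t) \<in> rules T' \<Longrightarrow> pinst T' xis t z \<Longrightarrow> pder T' p (RNode b xis) z"
| pinst_var: "1 \<le> j \<Longrightarrow> j \<le> length xis \<Longrightarrow> pder T' p (xis ! (j - 1)) z \<Longrightarrow> pinst T' xis (RVar p j) z"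
| pinst_node: "list_all2 (pinst T' xis) ts zs \<Longrightarrow> pinst T' xis (RNode c ts) (RNode c zs)"

definition product :: "('q, 'a, 'b) tdtt \<Rightarrow> ('p, 'b, 'c) tdtt \<Rightarrow> ('q \<times> 'p, 'a, 'c) tdtt" where
  "product T T' =
    \<lparr> states = states T \<times> states T', inp = inp T, outp = outp T',
      rules = {((q, p), a, k, z) | q p a k xi z.
                 (q, a, k, xi) \<in> rules T \<and> p \<in> states T' \<and> pder T' p xi z},
      init = (init T, init T') \<rparr>"

end

theory Submission
  imports Defs
begin

(* The domain automaton of T2, in state S, accepts exactly the trees on which every state in S
   has a successful computation of T2: its rule for S at a symbol a picks a nonempty set of
   applicable rules of T2 for each q in S and sends to the i-th child the set of all states
   applied to x_i in them.  Since the rules of a top-down automaton copy their input symbol, a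
   run of the product of T1 with an automaton A from (q, p) on s is the same as a run of T1 from
   q on s with output u together with a run of A from p on u.  So the product translates s into
   exactly the outputs of T1 that lie in dom(T2); as these are trees over the input alphabet of
   T2, its domain is dom(T1 o T2). *)

lemma ex_list_all2_iff: "(\<exists>ys. list_all2 R xs ys) \<longleftrightarrow> (\<forall>x\<in>set xs. \<exists>y. R x y)"
proof (induction xs)
  case (Cons x xs)
  then show ?case by (auto simp: list_all2_Cons1)
qed simp

lemma wf_rhs_rvarsD: "wf_rhs D Q k t \<Longrightarrow> (q, i) \<in> rvars t \<Longrightarrow> q \<in> Q \<and> 1 \<le> i \<and> i \<le> k"
  by (induction t) auto

lemma rvars_aut_rhs: "rvars (aut_rhs a k P) = (\<lambda>j. (P (Suc j), Suc j)) ` {..<k}"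
proof -
  have "[1..<Suc k] = map Suc [0..<k]" by (simp add: map_Suc_upt)
  then show ?thesis by (auto simp: aut_rhs_def simp del: upt_Suc)
qed

lemma ex_inst_iff:
  "(\<exists>u. inst T ss xi u) \<longleftrightarrow>
     (\<forall>(q, i)\<in>rvars xi. 1 \<le> i \<and> i \<le> length ss \<and> (\<exists>u. run T q (ss ! (i - 1)) u))"
proof (induction xi)
  case (RNode b ts)
  have "(\<exists>u. inst T ss (RNode b ts) u) \<longleftrightarrow> (\<exists>us. list_all2 (inst T ss) ts us)"
    by (auto simp: inst.simps[of T ss "RNode b ts"])
  also have "\<dots> \<longleftrightarrow> (\<forall>t\<in>set ts. \<exists>u. inst T ss t u)"
    by (rule ex_list_all2_iff)
  finally show ?case using RNode.IH by auto
qed (auto simp: inst.simps[of T ss "RVar _ _"])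

lemma ex_run_Nd_iff:
  "(\<exists>u. run T q (Nd a ss) u) \<longleftrightarrow> (\<exists>t\<in>rhs_of T q a (length ss). \<exists>u. inst T ss t u)"
  by (auto simp: run.simps[of T q "Nd a ss"] rhs_of_def)

lemma ex_inst_aut_rhs_iff:
  "(\<exists>u. inst T ss (aut_rhs a (length ss) P) u) \<longleftrightarrow> (\<forall>j<length ss. \<exists>u. run T (P (Suc j)) (ss ! j) u)"
  by (auto simp: ex_inst_iff rvars_aut_rhs)

lemma
  assumes "wf_tdtt T"
  shows run_in_trees_outp: "run T q s u \<Longrightarrow> u \<in> trees (outp T)"
    and "inst T ss xi u \<Longrightarrow> wf_rhs (outp T) (states T) (length ss) xi \<Longrightarrow> u \<in> trees (outp T)"
proof (induction q s u and ss xi u rule: run_inst.inducts)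
  case (run_rule q a ss t u)
  then show ?case using assms unfolding wf_tdtt_def by fastforce
next
  case (inst_node ss ts us b)
  then show ?case
    by (intro trees.intros) (auto simp: list_all2_conv_all_nth all_set_conv_all_nth)
qed simp

lemma wf_tdtt_ruleD:
  "wf_tdtt T \<Longrightarrow> (q, a, k, t) \<in> rules T \<Longrightarrow> q \<in> states T \<and> (a, k) \<in> inp T \<and> wf_rhs (outp T) (states T) k t"
  unfolding wf_tdtt_def by fastforce

lemma run_state_in_states: "wf_tdtt T \<Longrightarrow> run T q s u \<Longrightarrow> q \<in> states T"
  by (auto elim: run.cases dest: wf_tdtt_ruleD)

lemma domain_automaton_simps [simp]:
  "states (domain_automaton T) = Pow (states T)"
  "init (domain_automaton T) = {init T}"
  by (simp_all add: domain_automaton_def)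

lemma rules_domain_automaton_iff:
  "(S, a, k, t) \<in> rules (domain_automaton T) \<longleftrightarrow>
     (a, k) \<in> inp T \<and> S \<subseteq> states T \<and>
     (\<exists>Gam. (\<forall>q\<in>S. Gam q \<noteq> {} \<and> Gam q \<subseteq> rhs_of T q a k) \<and>
        t = aut_rhs a k (\<lambda>i. \<Union>q\<in>S. rhs_states_at (Gam q) i))"
  by (cases "S = {}") (auto simp: domain_automaton_def fun_eq_iff[symmetric])

lemma Nd_in_trees_iff:
  "Nd a ss \<in> trees Sig \<longleftrightarrow> (a, length ss) \<in> Sig \<and> (\<forall>j<length ss. ss ! j \<in> trees Sig)"
  by (subst trees.simps) (auto simp: all_set_conv_all_nth)

lemma ex_rhs_choice_iff_ex_runs:
  assumes wf: "wf_tdtt T"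
  shows "(\<exists>Gam. (\<forall>q\<in>S. Gam q \<noteq> {} \<and> Gam q \<subseteq> rhs_of T q a (length ss)) \<and>
            (\<forall>j<length ss. \<forall>q'\<in>(\<Union>q\<in>S. rhs_states_at (Gam q) (Suc j)). \<exists>v. run T q' (ss ! j) v))
         \<longleftrightarrow> (\<forall>q\<in>S. \<exists>v. run T q (Nd a ss) v)"
    (is "(\<exists>Gam. ?choice Gam) \<longleftrightarrow> _")
proof
  assume "\<exists>Gam. ?choice Gam"
  then obtain Gam where Gam: "\<forall>q\<in>S. Gam q \<noteq> {} \<and> Gam q \<subseteq> rhs_of T q a (length ss)"
    and succ: "\<forall>j<length ss. \<forall>q'\<in>(\<Union>q\<in>S. rhs_states_at (Gam q) (Suc j)). \<exists>v. run T q' (ss ! j) v"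
    by blast
  show "\<forall>q\<in>S. \<exists>v. run T q (Nd a ss) v"
  proof
    fix q assume q: "q \<in> S"
    from Gam q obtain g where g: "g \<in> Gam q" "g \<in> rhs_of T q a (length ss)" by blast
    have wfg: "wf_rhs (outp T) (states T) (length ss) g"
      using g(2) wf_tdtt_ruleD[OF wf] by (auto simp: rhs_of_def)
    have "1 \<le> i \<and> i \<le> length ss \<and> (\<exists>v. run T q' (ss ! (i - 1)) v)" if qi: "(q', i) \<in> rvars g" for q' i
    proof -
      have i: "1 \<le> i" "i \<le> length ss" using wf_rhs_rvarsD[OF wfg qi] by auto
      have "q' \<in> (\<Union>q\<in>S. rhs_states_at (Gam q) (Suc (i - 1)))"
        using q g(1) qi i by (auto simp: rhs_states_at_def)
      then show ?thesis using succ i by auto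
    qed
    then have "\<exists>u. inst T ss g u" unfolding ex_inst_iff by blast
    then show "\<exists>v. run T q (Nd a ss) v" using g(2) unfolding ex_run_Nd_iff by blast
  qed
next
  assume "\<forall>q\<in>S. \<exists>v. run T q (Nd a ss) v"
  then obtain g where g: "\<forall>q\<in>S. g q \<in> rhs_of T q a (length ss) \<and> (\<exists>u. inst T ss (g q) u)"
    unfolding ex_run_Nd_iff by metis
  \<comment> \<open>one rule per state suffices\<close>
  have "?choice (\<lambda>q. {g q})"
    using g by (fastforce simp: rhs_states_at_def ex_inst_iff)
  then show "\<exists>Gam. ?choice Gam" by (rule exI[of _ "\<lambda>q. {g q}"])
qed

lemma run_domain_automaton_iff:
  assumes wf: "wf_tdtt T"
  shows "(\<exists>u. run (domain_automaton T) S t u) \<longleftrightarrow> t \<in> trees (inp T) \<and> (\<forall>q\<in>S. \<exists>v. run T q t v)"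
proof (induction t arbitrary: S)
  case (Nd a ss)
  let ?k = "length ss"
  let ?succ = "\<lambda>Gam i. \<Union>q\<in>S. rhs_states_at (Gam q) i"
  have IH: "(\<exists>u. run (domain_automaton T) S' (ss ! j) u) \<longleftrightarrow>
      ss ! j \<in> trees (inp T) \<and> (\<forall>q\<in>S'. \<exists>v. run T q (ss ! j) v)" if "j < ?k" for j S'
    using Nd.IH that by simp
  have ex_conj_pull: "\<And>P Q R. (\<exists>x. P x \<and> Q \<and> R x) \<longleftrightarrow> Q \<and> (\<exists>x. P x \<and> R x)"
    by blast
  have "(\<exists>u. run (domain_automaton T) S (Nd a ss) u) \<longleftrightarrow>
      (a, ?k) \<in> inp T \<and> S \<subseteq> states T \<and>
      (\<exists>Gam. (\<forall>q\<in>S. Gam q \<noteq> {} \<and> Gam q \<subseteq> rhs_of T q a ?k) \<and>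
         (\<exists>u. inst (domain_automaton T) ss (aut_rhs a ?k (?succ Gam)) u))"
    by (auto simp: ex_run_Nd_iff rhs_of_def rules_domain_automaton_iff)
  also have "\<dots> \<longleftrightarrow>
      (a, ?k) \<in> inp T \<and> S \<subseteq> states T \<and> (\<forall>j<?k. ss ! j \<in> trees (inp T)) \<and>
      (\<exists>Gam. (\<forall>q\<in>S. Gam q \<noteq> {} \<and> Gam q \<subseteq> rhs_of T q a ?k) \<and>
         (\<forall>j<?k. \<forall>q'\<in>?succ Gam (Suc j). \<exists>v. run T q' (ss ! j) v))"
    by (simp add: ex_inst_aut_rhs_iff IH imp_conjR all_conj_distrib ex_conj_pull cong: conj_cong)
  also have "\<dots> \<longleftrightarrow> Nd a ss \<in> trees (inp T) \<and> (\<forall>q\<in>S. \<exists>v. run T q (Nd a ss) v)"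
    unfolding ex_rhs_choice_iff_ex_runs[OF wf] Nd_in_trees_iff
    using run_state_in_states[OF wf] by blast
  finally show ?case .
qed

definition td_automaton :: "('p, 'b, 'b) tdtt \<Rightarrow> bool" where
  "td_automaton A \<longleftrightarrow> (\<forall>(p, b, k, t) \<in> rules A. p \<in> states A \<and> (\<exists>P. t = aut_rhs b k P))"

lemma td_automaton_domain_automaton: "td_automaton (domain_automaton T)"
  by (auto simp: td_automaton_def rules_domain_automaton_iff)

lemma td_automaton_run_state_in_states: "td_automaton A \<Longrightarrow> run A p u u' \<Longrightarrow> p \<in> states A"
  by (auto simp: td_automaton_def elim: run.cases)

lemma pinst_aut_rhs_iff:
  "pinst A xis (aut_rhs b (length xis) P) z \<longleftrightarrow>
     (\<exists>zs. z = RNode b zs \<and> length zs = length xis \<and>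
        (\<forall>j<length xis. pder A (P (Suc j)) (xis ! j) (zs ! j)))"
  by (auto simp: aut_rhs_def pinst.simps[of A xis "RNode _ _"] pinst.simps[of A xis "RVar _ _"]
      list_all2_conv_all_nth nth_upt simp del: upt_Suc)

lemma pder_RVar_iff: "pder A p (RVar q i) z \<longleftrightarrow> z = RVar (q, p) i"
  by (auto simp: pder.simps[of A p "RVar q i"])

lemma pder_RNode_iff:
  assumes "td_automaton A"
  shows "pder A p (RNode b xis) z \<longleftrightarrow>
     (\<exists>P. (p, b, length xis, aut_rhs b (length xis) P) \<in> rules A \<and>
        pinst A xis (aut_rhs b (length xis) P) z)"
  using assms by (auto simp: td_automaton_def pder.simps[of A p "RNode b xis"])

lemma product_simps [simp]:
  "inp (product T A) = inp T"
  "init (product T A) = (init T, init A)"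
  by (simp_all add: product_def)

lemma rules_product_iff:
  "((q, p), a, k, z) \<in> rules (product T A) \<longleftrightarrow>
     (\<exists>xi. (q, a, k, xi) \<in> rules T \<and> p \<in> states A \<and> pder A p xi z)"
  by (auto simp: product_def)

lemma
  assumes A: "td_automaton A"
  shows run_product_sound: "run (product T A) qp s u \<Longrightarrow> run T (fst qp) s u \<and> (\<exists>u'. run A (snd qp) u u')"
    and "inst (product T A) ss z u \<Longrightarrow> \<forall>p xi. pder A p xi z \<longrightarrow> inst T ss xi u \<and> (\<exists>u'. run A p u u')"
proof (induction qp s u and ss z u rule: run_inst.inducts)
  case (run_rule qp a ss z u)
  then obtain xi where "(fst qp, a, length ss, xi) \<in> rules T" "pder A (snd qp) xi z"
    by (metis prod.collapse rules_product_iff)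
  with run_rule.IH show ?case by (blast intro: run_inst.intros(1))
next
  case (inst_var i ss qp u)
  show ?case
  proof (intro allI impI)
    fix p xi assume "pder A p xi (RVar qp i)"
    then show "inst T ss xi u \<and> (\<exists>u'. run A p u u')"
    proof (cases xi)
      case (RNode c xis)
      with \<open>pder A p xi (RVar qp i)\<close> show ?thesis by (auto simp: pder_RNode_iff[OF A] pinst_aut_rhs_iff)
    qed (use inst_var in \<open>auto simp: pder_RVar_iff intro: run_inst.intros(2)\<close>)
  qed
next
  case (inst_node ss zs us b)
  show ?case
  proof (intro allI impI)
    fix p xi assume "pder A p xi (RNode b zs)"
    then show "inst T ss xi (Nd b us) \<and> (\<exists>u'. run A p (Nd b us) u')"
    proof (cases xi)
      case (RNode c xis)
      with \<open>pder A p xi (RNode b zs)\<close> obtain P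
        where rule: "(p, c, length xis, aut_rhs c (length xis) P) \<in> rules A"
          and "pinst A xis (aut_rhs c (length xis) P) (RNode b zs)"
        by (auto simp: pder_RNode_iff[OF A])
      then have c: "c = b" and len: "length zs = length xis"
        and sub: "\<forall>j<length xis. pder A (P (Suc j)) (xis ! j) (zs ! j)"
        by (auto simp: pinst_aut_rhs_iff)
      have len_us: "length us = length xis" using inst_node.IH len by (simp add: list_all2_lengthD)
      have IH: "inst T ss (xis ! j) (us ! j) \<and> (\<exists>u'. run A (P (Suc j)) (us ! j) u')"
        if "j < length xis" for j
        using inst_node.IH that sub len by (auto simp: list_all2_conv_all_nth)
      have "inst T ss xi (Nd b us)"
        unfolding RNode c using IH len_us by (intro run_inst.intros(3)) (simp add: list_all2_conv_all_nth)
      moreover have "\<exists>u'. inst A us (aut_rhs b (length us) P) u'"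
        unfolding ex_inst_aut_rhs_iff using IH len_us by simp
      then have "\<exists>u'. run A p (Nd b us) u'"
        unfolding ex_run_Nd_iff rhs_of_def using rule c len_us by auto
      ultimately show ?thesis ..
    qed (simp add: pder_RVar_iff)
  qed
qed

lemma
  assumes A: "td_automaton A"
  shows run_product_complete: "run T q s u \<Longrightarrow> \<forall>p. (\<exists>u'. run A p u u') \<longrightarrow> run (product T A) (q, p) s u"
    and "inst T ss xi u \<Longrightarrow> \<forall>p. (\<exists>u'. run A p u u') \<longrightarrow> (\<exists>z. pder A p xi z \<and> inst (product T A) ss z u)"
proof (induction q s u and ss xi u rule: run_inst.inducts)
  case (run_rule q a ss xi u)
  show ?case
  proof (intro allI impI)
    fix p assume acc: "\<exists>u'. run A p u u'"
    then have "p \<in> states A" using td_automaton_run_state_in_states[OF A] by blast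
    moreover obtain z where "pder A p xi z" "inst (product T A) ss z u" using run_rule.IH acc by blast
    ultimately have "((q, p), a, length ss, z) \<in> rules (product T A)"
      unfolding rules_product_iff using run_rule(1) by blast
    then show "run (product T A) (q, p) (Nd a ss) u"
      using \<open>inst (product T A) ss z u\<close> by (rule run_inst.intros(1))
  qed
next
  case (inst_var i ss q u)
  then show ?case by (blast intro: pder_var run_inst.intros(2))
next
  case (inst_node ss ts us b)
  show ?case
  proof (intro allI impI)
    fix p assume "\<exists>u'. run A p (Nd b us) u'"
    then obtain t where t: "(p, b, length us, t) \<in> rules A" and "\<exists>u'. inst A us t u'"
      unfolding ex_run_Nd_iff rhs_of_def by blast
    moreover from t A obtain P where P: "t = aut_rhs b (length us) P"
      unfolding td_automaton_def by blast
    ultimately have acc: "\<forall>j<length us. \<exists>u'. run A (P (Suc j)) (us ! j) u'"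
      by (simp add: ex_inst_aut_rhs_iff)
    have len: "length ts = length us" using inst_node.IH by (simp add: list_all2_lengthD)
    have "\<forall>j<length us. \<exists>z. pder A (P (Suc j)) (ts ! j) z \<and> inst (product T A) ss z (us ! j)"
      using inst_node.IH acc len by (auto simp: list_all2_conv_all_nth)
    then obtain f where f: "\<forall>j<length us. pder A (P (Suc j)) (ts ! j) (f j) \<and> inst (product T A) ss (f j) (us ! j)"
      by metis
    define zs where "zs = map f [0..<length us]"
    have "pder A p (RNode b ts) (RNode b zs)"
      unfolding pder_RNode_iff[OF A] pinst_aut_rhs_iff using t P f len by (auto simp: zs_def)
    moreover have "inst (product T A) ss (RNode b zs) (Nd b us)"
      using f by (intro run_inst.intros(3)) (simp add: list_all2_conv_all_nth zs_def)
    ultimately show "\<exists>z. pder A p (RNode b ts) z \<and> inst (product T A) ss z (Nd b us)" by blast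
  qed
qed

lemma run_product_iff:
  "td_automaton A \<Longrightarrow> run (product T A) (q, p) s u \<longleftrightarrow> run T q s u \<and> (\<exists>u'. run A p u u')"
  using run_product_sound[of A T "(q, p)"] run_product_complete[of A T q s u] by auto

lemma transl_product_domain_automaton:
  assumes "wf_tdtt T2"
  shows "transl (product T1 (domain_automaton T2)) s = transl T1 s \<inter> tdom T2"
  using assms
  by (auto simp: transl_def tdom_def run_product_iff[OF td_automaton_domain_automaton]
      run_domain_automaton_iff)

theorem lemma14:
  fixes T1 :: "('q1, 'a, 'b) tdtt" and T2 :: "('q2, 'b, 'c) tdtt"
  assumes "wf_tdtt T1" and "wf_tdtt T2" and "inp T2 = outp T1"
  shows "tdom (product T1 (domain_automaton T2)) = tdom_comp T1 T2
       \<and> (\<forall>s \<in> trees (inp T1).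
            transl (product T1 (domain_automaton T2)) s = transl T1 s \<inter> tdom T2)"
proof -
  have transl: "transl (product T1 (domain_automaton T2)) s = transl T1 s \<inter> tdom T2" for s
    using assms(2) by (rule transl_product_domain_automaton)
  have "transl T1 s \<subseteq> trees (inp T2)" for s
    using run_in_trees_outp[OF assms(1)] assms(3) by (auto simp: transl_def)
  then have "tdom (product T1 (domain_automaton T2)) = tdom_comp T1 T2"
    by (auto simp: tdom_def tdom_comp_def transl)
  with transl show ?thesis by blast
qed

end
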